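(* Let $p,q\geq 2$ be integers. (i) $\chi_{\mathrm{so}}(K_p\Box K_q)=pq$. (ii) If both $p$ and $q$ are odd (and at least $3$), then $\chi_{\mathrm{so}}(K_p\times K_q)=pq$. (iii) If $p$ is even and $q$ is odd, then $\chi_{\mathrm{so}}(K_p\times K_q)=q$. (iv) If both $p$ and $q$ are even, then $\chi_{\mathrm{so}}(K_p\times K_q)=\min(p,q)$.
   Context: A strong odd coloring of a simple graph $G$ is a proper vertex coloring of $G$ such that for every non-isolated vertex $v$ and every color $c$, either no vertex of the open neighborhood $N_G(v)$ has color $c$, or color $c$ is used on an odd number of vertices of $N_G(v)$; $\chi_{\mathrm{so}}(G)$ is the minimum number of colors in such a coloring. $K_n$ is the complete graph on $n$ vertices. The Cartesian product $G\Box H$ has vertex set $V_G\times V_H$, with $(g,h)(g',h')$ an edge iff ($g=g'$ and $hh'\in E_H$) or ($gg'\in E_G$ and $h=h'$). The direct product $G\times H$ has vertex set $V_G\times V_H$, with $(g,h)(g',h')$ an edge iff $gg'\in E_G$ and $hh'\in E_H$. *)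

theory Defs
  imports Main
begin

text \<open>A simple graph is given by a vertex set V and a symmetric irreflexive
adjacency relation E (only its restriction to V matters).\<close>

definition nbhd :: "'a set \<Rightarrow> ('a \<Rightarrow> 'a \<Rightarrow> bool) \<Rightarrow> 'a \<Rightarrow> 'a set" where
  "nbhd V E v = {u \<in> V. E v u}"

definition proper_coloring :: "'a set \<Rightarrow> ('a \<Rightarrow> 'a \<Rightarrow> bool) \<Rightarrow> ('a \<Rightarrow> nat) \<Rightarrow> bool" where
  "proper_coloring V E c \<longleftrightarrow> (\<forall>u\<in>V. \<forall>v\<in>V. E u v \<longrightarrow> c u \<noteq> c v)"

definition strong_odd_coloring :: "'a set \<Rightarrow> ('a \<Rightarrow> 'a \<Rightarrow> bool) \<Rightarrow> ('a \<Rightarrow> nat) \<Rightarrow> bool" where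
  "strong_odd_coloring V E c \<longleftrightarrow> proper_coloring V E c \<and>
     (\<forall>v\<in>V. nbhd V E v \<noteq> {} \<longrightarrow>
        (\<forall>k. {u \<in> nbhd V E v. c u = k} = {} \<or> odd (card {u \<in> nbhd V E v. c u = k})))"

definition chi_so :: "'a set \<Rightarrow> ('a \<Rightarrow> 'a \<Rightarrow> bool) \<Rightarrow> nat" where
  "chi_so V E = (LEAST k. \<exists>c. strong_odd_coloring V E c \<and> c ` V \<subseteq> {0..<k})"

definition K_verts :: "nat \<Rightarrow> nat set" where
  "K_verts n = {0..<n}"

definition K_adj :: "nat \<Rightarrow> nat \<Rightarrow> bool" where
  "K_adj x y \<longleftrightarrow> x \<noteq> y"

definition cart_adj :: "('a \<Rightarrow> 'a \<Rightarrow> bool) \<Rightarrow> ('b \<Rightarrow> 'b \<Rightarrow> bool) \<Rightarrow> 'a \<times> 'b \<Rightarrow> 'a \<times> 'b \<Rightarrow> bool" where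
  "cart_adj EG EH x y \<longleftrightarrow>
     (fst x = fst y \<and> EH (snd x) (snd y)) \<or> (EG (fst x) (fst y) \<and> snd x = snd y)"

definition dir_adj :: "('a \<Rightarrow> 'a \<Rightarrow> bool) \<Rightarrow> ('b \<Rightarrow> 'b \<Rightarrow> bool) \<Rightarrow> 'a \<times> 'b \<Rightarrow> 'a \<times> 'b \<Rightarrow> bool" where
  "dir_adj EG EH x y \<longleftrightarrow> EG (fst x) (fst y) \<and> EH (snd x) (snd y)"

end

theory Submission
  imports Defs
begin

text \<open>
  In \<open>K\<^sub>p \<box> K\<^sub>q\<close> two distinct vertices \<open>(a, b)\<close>, \<open>(a', b')\<close> of the same colour lie in
  different rows and columns, and then they are the only neighbours of \<open>(a, b')\<close> of that
  colour; so every strong odd colouring is injective.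

  In \<open>K\<^sub>p \<times> K\<^sub>q\<close> a colour repeated in row \<open>a\<close> can occur nowhere outside that row, so a vertex
  \<open>(x, y)\<close> with \<open>x \<noteq> a\<close> sees exactly the vertices of that colour in row \<open>a\<close> outside column
  \<open>y\<close>. Parity then forces the colour to fill the whole row, and \<open>q\<close> to be even. Hence for
  odd \<open>q\<close> every row is rainbow, for odd \<open>p\<close> and \<open>q\<close> the colouring is injective, and when
  both are even the first row or the first column is rainbow. Conversely, if \<open>p\<close> is even,
  colouring each vertex by its column is strong odd: a vertex sees \<open>p - 1\<close> vertices of each
  colour other than its own.
\<close>

lemma strong_odd_coloringD:
  assumes "strong_odd_coloring V E c"
  shows strong_odd_coloring_proper: "\<lbrakk>u \<in> V; v \<in> V; E u v\<rbrakk> \<Longrightarrow> c u \<noteq> c v"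
    and strong_odd_coloring_odd:
      "\<lbrakk>v \<in> V; w \<in> nbhd V E v; c w = k\<rbrakk> \<Longrightarrow> odd (card {u \<in> nbhd V E v. c u = k})"
  using assms unfolding strong_odd_coloring_def proper_coloring_def by blast+

lemma chi_so_eqI:
  assumes "finite V" and "strong_odd_coloring V E c\<^sub>0" and "c\<^sub>0 ` V \<subseteq> {0..<n}"
    and "\<And>c. strong_odd_coloring V E c \<Longrightarrow> n \<le> card (c ` V)"
  shows "chi_so V E = n"
  unfolding chi_so_def
proof (rule Least_equality)
  show "\<exists>c. strong_odd_coloring V E c \<and> c ` V \<subseteq> {0..<n}"
    using assms(2,3) by blast
next
  fix k assume "\<exists>c. strong_odd_coloring V E c \<and> c ` V \<subseteq> {0..<k}"
  then obtain c where c: "strong_odd_coloring V E c" and range: "c ` V \<subseteq> {0..<k}"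
    by blast
  have "n \<le> card (c ` V)" using assms(4)[OF c] .
  also have "\<dots> \<le> card {0..<k}" using range by (intro card_mono) simp_all
  finally show "n \<le> k" by simp
qed

lemma strong_odd_coloring_if_inj_on:
  assumes "inj_on c V" and "\<And>u. \<not> E u u"
  shows "strong_odd_coloring V E c"
  unfolding strong_odd_coloring_def proper_coloring_def
proof (intro conjI ballI allI impI)
  fix u v assume "u \<in> V" "v \<in> V" "E u v"
  then show "c u \<noteq> c v" using assms by (metis inj_on_def)
next
  fix v k
  show "{u \<in> nbhd V E v. c u = k} = {} \<or> odd (card {u \<in> nbhd V E v. c u = k})"
  proof (cases "{u \<in> nbhd V E v. c u = k} = {}")
    case False
    then obtain w where w: "w \<in> {u \<in> nbhd V E v. c u = k}" by blast
    with assms(1) have "{u \<in> nbhd V E v. c u = k} = {w}"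
      unfolding nbhd_def inj_on_def by auto
    then show ?thesis by simp
  qed simp
qed

lemma chi_so_eq_card_if_inj:
  assumes "finite V" and "\<And>u. \<not> E u u"
    and "\<And>c. strong_odd_coloring V E c \<Longrightarrow> inj_on c V"
  shows "chi_so V E = card V"
proof -
  obtain h where h: "bij_betw h V {0..<card V}"
    using ex_bij_betw_finite_nat[OF assms(1)] by blast
  show ?thesis
  proof (rule chi_so_eqI[OF assms(1)])
    show "strong_odd_coloring V E h"
      using h assms(2) by (auto intro: strong_odd_coloring_if_inj_on simp: bij_betw_def)
    show "h ` V \<subseteq> {0..<card V}" using h by (simp add: bij_betw_def)
  qed (simp add: assms(3) card_image)
qed

lemma strong_odd_coloring_comp_iso:
  assumes f: "bij_betw f V W"
    and adj: "\<And>u v. u \<in> V \<Longrightarrow> v \<in> V \<Longrightarrow> E u v \<longleftrightarrow> F (f u) (f v)"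
    and c: "strong_odd_coloring W F c"
  shows "strong_odd_coloring V E (c \<circ> f)"
  unfolding strong_odd_coloring_def proper_coloring_def
proof (intro conjI ballI allI impI)
  fix u v assume "u \<in> V" "v \<in> V" "E u v"
  then show "(c \<circ> f) u \<noteq> (c \<circ> f) v"
    using f adj strong_odd_coloring_proper[OF c] by (simp add: bij_betw_apply)
next
  fix v k assume v: "v \<in> V"
  let ?S = "{u \<in> nbhd V E v. (c \<circ> f) u = k}"
  have image: "f ` ?S = {w \<in> nbhd W F (f v). c w = k}"
  proof (intro equalityI subsetI)
    fix w assume "w \<in> f ` ?S"
    then show "w \<in> {w \<in> nbhd W F (f v). c w = k}"
      using f adj v by (auto simp: nbhd_def bij_betw_apply)
  next
    fix w assume w: "w \<in> {w \<in> nbhd W F (f v). c w = k}"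
    then obtain u where "u \<in> V" "w = f u"
      using f by (auto simp: nbhd_def bij_betw_def)
    then show "w \<in> f ` ?S" using w adj v by (auto simp: nbhd_def)
  qed
  have "inj_on f ?S"
    using f by (rule inj_on_subset[OF bij_betw_imp_inj_on]) (auto simp: nbhd_def)
  then have card_eq: "card ?S = card {w \<in> nbhd W F (f v). c w = k}"
    by (simp add: card_image flip: image)
  show "?S = {} \<or> odd (card ?S)"
  proof (cases "?S = {}")
    case False
    then obtain u where "u \<in> ?S" by blast
    then have "f u \<in> nbhd W F (f v)" "c (f u) = k" using image by blast+
    then have "odd (card {w \<in> nbhd W F (f v). c w = k})"
      by (rule strong_odd_coloring_odd[OF c bij_betw_apply[OF f v]])
    then show ?thesis using card_eq by simp
  qed simp
qed

lemma strong_odd_coloring_dir_adj_swap: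
  assumes "strong_odd_coloring (B \<times> A) (dir_adj EH EG) c"
  shows "strong_odd_coloring (A \<times> B) (dir_adj EG EH) (c \<circ> prod.swap)"
proof (rule strong_odd_coloring_comp_iso[OF _ _ assms])
  show "bij_betw prod.swap (A \<times> B) (B \<times> A)"
    by (simp add: bij_betw_def product_swap)
  show "dir_adj EG EH u v \<longleftrightarrow> dir_adj EH EG (prod.swap u) (prod.swap v)" for u v
    by (auto simp: dir_adj_def)
qed

lemma eq_if_odd_card_Diff_singleton:
  assumes "finite S" and "T \<subseteq> S" and "T \<noteq> {}" and odd: "\<And>y. y \<in> S \<Longrightarrow> odd (card (T - {y}))"
  shows "T = S \<and> even (card S)"
proof -
  have fin: "finite T" using assms(1,2) by (rule finite_subset[rotated])
  obtain t where t: "t \<in> T" using assms(3) by blast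
  have "odd (card T - 1)" using odd[of t] t assms(2) fin by auto
  moreover have "card T \<noteq> 0" using fin t by auto
  ultimately have even: "even (card T)" by simp
  have "S \<subseteq> T"
  proof
    fix y assume "y \<in> S"
    show "y \<in> T"
    proof (rule ccontr)
      assume "y \<notin> T"
      then have "odd (card T)" using odd[OF \<open>y \<in> S\<close>] by simp
      with even show False by simp
    qed
  qed
  with assms(2) even show ?thesis by auto
qed

lemma cart_adj_K_adj [simp]:
  "cart_adj K_adj K_adj (a, b) (a', b') \<longleftrightarrow> (a = a' \<and> b \<noteq> b') \<or> (a \<noteq> a' \<and> b = b')"
  by (auto simp: cart_adj_def K_adj_def)

lemma dir_adj_K_adj [simp]:
  "dir_adj K_adj K_adj (a, b) (a', b') \<longleftrightarrow> a \<noteq> a' \<and> b \<noteq> b'"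
  by (simp add: dir_adj_def K_adj_def)

lemma mem_K_verts [simp]: "a \<in> K_verts n \<longleftrightarrow> a < n"
  by (simp add: K_verts_def)

lemma card_K_verts_times: "card (K_verts p \<times> K_verts q) = p * q"
  by (simp add: K_verts_def card_cartesian_product)

lemma finite_K_verts_times: "finite (K_verts p \<times> K_verts q)"
  by (simp add: K_verts_def)

lemma strong_odd_coloring_cart_inj_on:
  assumes c: "strong_odd_coloring (K_verts p \<times> K_verts q) (cart_adj K_adj K_adj) c"
  shows "inj_on c (K_verts p \<times> K_verts q)"
proof (rule inj_onI, rule ccontr)
  let ?V = "K_verts p \<times> K_verts q" and ?E = "cart_adj K_adj K_adj"
  fix u v assume u: "u \<in> ?V" and v: "v \<in> ?V" and same: "c u = c v" and "u \<noteq> v"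
  obtain a b a' b' where uv [simp]: "u = (a, b)" "v = (a', b')" by fastforce
  have "\<not> ?E u v" using strong_odd_coloring_proper[OF c u v] same by blast
  with \<open>u \<noteq> v\<close> have "a \<noteq> a'" "b \<noteq> b'" by auto
  have same_colour: "{z \<in> nbhd ?V ?E (a, b'). c z = c u} = {u, v}"
  proof (intro equalityI subsetI)
    fix z assume z: "z \<in> {z \<in> nbhd ?V ?E (a, b'). c z = c u}"
    obtain x y where z_eq [simp]: "z = (x, y)" by fastforce
    have zV: "z \<in> ?V" and cz: "c z = c u" using z by (simp_all add: nbhd_def)
    have "\<not> ?E z u" "\<not> ?E z v"
      using strong_odd_coloring_proper[OF c zV u] strong_odd_coloring_proper[OF c zV v] cz same
      by auto
    with z show "z \<in> {u, v}" by (auto simp: nbhd_def)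
  qed (use u v same \<open>a \<noteq> a'\<close> \<open>b \<noteq> b'\<close> in \<open>auto simp: nbhd_def\<close>)
  have "(a, b') \<in> ?V" "u \<in> nbhd ?V ?E (a, b')"
    using u v \<open>b \<noteq> b'\<close> by (simp_all add: nbhd_def)
  then have "odd (card {z \<in> nbhd ?V ?E (a, b'). c z = c u})"
    by (rule strong_odd_coloring_odd[OF c _ _ refl])
  with \<open>u \<noteq> v\<close> show False using same_colour by simp
qed

lemma strong_odd_coloring_dir_color_class_in_row:
  assumes c: "strong_odd_coloring (K_verts p \<times> K_verts q) (dir_adj K_adj K_adj) c"
    and "a < p" "b < q" "b' < q" "b \<noteq> b'" and same: "c (a, b) = c (a, b')"
    and u: "u \<in> K_verts p \<times> K_verts q" and cu: "c u = c (a, b)"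
  shows "fst u = a"
proof (rule ccontr)
  assume "fst u \<noteq> a"
  then have "dir_adj K_adj K_adj u (a, b) \<or> dir_adj K_adj K_adj u (a, b')"
    using \<open>b \<noteq> b'\<close> by (cases u) auto
  then show False
    using strong_odd_coloring_proper[OF c u, of "(a, b)"]
      strong_odd_coloring_proper[OF c u, of "(a, b')"] assms(2-4) same cu
    by auto
qed

lemma strong_odd_coloring_dir_row_repeat:
  assumes c: "strong_odd_coloring (K_verts p \<times> K_verts q) (dir_adj K_adj K_adj) c"
    and "2 \<le> p" and a: "a < p" and b: "b < q" "b' < q" "b \<noteq> b'" and same: "c (a, b) = c (a, b')"
  shows "even q \<and> (\<forall>y<q. c (a, y) = c (a, b))"
proof -
  let ?V = "K_verts p \<times> K_verts q" and ?E = "dir_adj K_adj K_adj"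
  define T where "T = {y \<in> {0..<q}. c (a, y) = c (a, b)}"
  define x where "x = (if a = 0 then 1 else 0 :: nat)"
  have x: "x < p" "x \<noteq> a" using \<open>2 \<le> p\<close> by (auto simp: x_def)
  have odd: "odd (card (T - {y}))" if y: "y \<in> {0..<q}" for y
  proof -
    have seen: "{u \<in> nbhd ?V ?E (x, y). c u = c (a, b)} = Pair a ` (T - {y})"
    proof (intro equalityI subsetI)
      fix u assume u: "u \<in> {u \<in> nbhd ?V ?E (x, y). c u = c (a, b)}"
      then have "u \<in> ?V" "c u = c (a, b)" "?E (x, y) u" by (simp_all add: nbhd_def)
      moreover from this(1,2) have "fst u = a" by (rule strong_odd_coloring_dir_color_class_in_row[OF c a b same])
      ultimately show "u \<in> Pair a ` (T - {y})" by (cases u) (auto simp: T_def)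
    next
      fix u assume "u \<in> Pair a ` (T - {y})"
      with x a show "u \<in> {u \<in> nbhd ?V ?E (x, y). c u = c (a, b)}"
        by (auto simp: nbhd_def T_def)
    qed
    let ?w = "(a, if y = b then b' else b)"
    have "(x, y) \<in> ?V" "?w \<in> nbhd ?V ?E (x, y)" "c ?w = c (a, b)"
      using x y a b same by (simp_all add: nbhd_def)
    then have "odd (card {u \<in> nbhd ?V ?E (x, y). c u = c (a, b)})"
      by (rule strong_odd_coloring_odd[OF c])
    then show ?thesis by (simp add: seen card_image inj_on_def)
  qed
  have "T \<subseteq> {0..<q}" "T \<noteq> {}" using b by (auto simp: T_def)
  from eq_if_odd_card_Diff_singleton[OF finite_atLeastLessThan this odd]
  have full: "T = {0..<q}" and "even q" by simp_all
  have "c (a, y) = c (a, b)" if "y < q" for y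
  proof -
    from that full have "y \<in> T" by simp
    then show ?thesis by (simp add: T_def)
  qed
  with \<open>even q\<close> show ?thesis by blast
qed

lemma strong_odd_coloring_dir_row:
  assumes c: "strong_odd_coloring (K_verts p \<times> K_verts q) (dir_adj K_adj K_adj) c"
    and "2 \<le> p" and "a < p"
  shows "inj_on (\<lambda>y. c (a, y)) {0..<q} \<or> (even q \<and> (\<forall>y<q. c (a, y) = c (a, 0)))"
proof (cases "inj_on (\<lambda>y. c (a, y)) {0..<q}")
  case False
  then obtain b b' where repeat: "b < q" "b' < q" "b \<noteq> b'" "c (a, b) = c (a, b')"
    by (auto simp: inj_on_def)
  from strong_odd_coloring_dir_row_repeat[OF c assms(2,3) repeat]
  have "even q" and row: "\<forall>y<q. c (a, y) = c (a, b)" by simp_all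
  moreover have "\<forall>y<q. c (a, y) = c (a, 0)" using row \<open>b < q\<close> by (metis gr_zeroI not_less0)
  ultimately show ?thesis by blast
qed simp

lemma strong_odd_coloring_dir_column:
  assumes c: "strong_odd_coloring (K_verts p \<times> K_verts q) (dir_adj K_adj K_adj) c"
    and "2 \<le> q" and "b < q"
  shows "inj_on (\<lambda>x. c (x, b)) {0..<p} \<or> (even p \<and> (\<forall>x<p. c (x, b) = c (0, b)))"
  using strong_odd_coloring_dir_row[OF strong_odd_coloring_dir_adj_swap[OF c] assms(2,3)]
  by simp

lemma strong_odd_coloring_dir_row_or_column_inj:
  assumes c: "strong_odd_coloring (K_verts p \<times> K_verts q) (dir_adj K_adj K_adj) c"
    and "2 \<le> p" and "2 \<le> q"
  shows "inj_on (\<lambda>y. c (0, y)) {0..<q} \<or> inj_on (\<lambda>x. c (x, 0)) {0..<p}"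
proof (rule ccontr)
  assume "\<not> ?thesis"
  moreover have "0 < p" "0 < q" "1 < p" "1 < q" using assms(2,3) by simp_all
  ultimately have "\<forall>y<q. c (0, y) = c (0, 0)" "\<forall>x<p. c (x, 0) = c (0, 0)"
    using strong_odd_coloring_dir_row[OF c assms(2)] strong_odd_coloring_dir_column[OF c assms(3)]
    by blast+
  with \<open>1 < p\<close> \<open>1 < q\<close> have "c (0, 1) = c (0, 0)" "c (1, 0) = c (0, 0)" by blast+
  moreover have "c (1, 0) \<noteq> c (0, 1)"
    using strong_odd_coloring_proper[OF c, of "(1, 0)" "(0, 1)"] assms(2,3) by simp
  ultimately show False by simp
qed

lemma strong_odd_coloring_dir_inj_on_if_odd:
  assumes c: "strong_odd_coloring (K_verts p \<times> K_verts q) (dir_adj K_adj K_adj) c"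
    and "2 \<le> p" "2 \<le> q" "odd p" "odd q"
  shows "inj_on c (K_verts p \<times> K_verts q)"
proof (rule inj_onI)
  fix u v assume u: "u \<in> K_verts p \<times> K_verts q" and v: "v \<in> K_verts p \<times> K_verts q"
    and same: "c u = c v"
  obtain a b a' b' where uv: "u = (a, b)" "v = (a', b')" by fastforce
  consider "a = a'" | "b = b'" | "dir_adj K_adj K_adj u v"
    using uv by auto
  then show "u = v"
  proof cases
    case 1
    with strong_odd_coloring_dir_row[OF c assms(2), of a] \<open>odd q\<close> u v same uv
    show ?thesis by (auto simp: inj_on_def)
  next
    case 2
    with strong_odd_coloring_dir_column[OF c assms(3), of b] \<open>odd p\<close> u v same uv
    show ?thesis by (auto simp: inj_on_def)
  next
    case 3
    with strong_odd_coloring_proper[OF c u v] same show ?thesis by simp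
  qed
qed

lemma card_image_ge_if_inj_on_row:
  assumes "inj_on (\<lambda>y. c (a, y)) {0..<q}" and "a < p"
  shows "q \<le> card (c ` (K_verts p \<times> K_verts q))"
  using card_inj_on_le[OF assms(1) _ finite_imageI[OF finite_K_verts_times]] assms(2)
  by force

lemma card_image_ge_if_inj_on_column:
  assumes "inj_on (\<lambda>x. c (x, b)) {0..<p}" and "b < q"
  shows "p \<le> card (c ` (K_verts p \<times> K_verts q))"
  using card_inj_on_le[OF assms(1) _ finite_imageI[OF finite_K_verts_times]] assms(2)
  by force

lemma strong_odd_coloring_dir_snd:
  assumes "even p"
  shows "strong_odd_coloring (K_verts p \<times> K_verts q) (dir_adj K_adj K_adj) snd"
  unfolding strong_odd_coloring_def proper_coloring_def
proof (intro conjI ballI allI impI)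
  fix u v :: "nat \<times> nat" assume "dir_adj K_adj K_adj u v"
  then show "snd u \<noteq> snd v" by (simp add: dir_adj_def K_adj_def)
next
  fix v :: "nat \<times> nat" and k assume v: "v \<in> K_verts p \<times> K_verts q"
  let ?S = "{u \<in> nbhd (K_verts p \<times> K_verts q) (dir_adj K_adj K_adj) v. snd u = k}"
  obtain x y where xy: "v = (x, y)" by fastforce
  show "?S = {} \<or> odd (card ?S)"
  proof (cases "k < q \<and> k \<noteq> y")
    case True
    then have "?S = (\<lambda>z. (z, k)) ` ({0..<p} - {x})"
      using xy by (auto simp: nbhd_def)
    then have "card ?S = p - 1"
      using v xy by (simp add: card_image inj_on_def)
    with \<open>even p\<close> v show ?thesis by auto
  next
    case False
    then show ?thesis using xy by (auto simp: nbhd_def)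
  qed
qed

lemma strong_odd_coloring_dir_fst:
  assumes "even q"
  shows "strong_odd_coloring (K_verts p \<times> K_verts q) (dir_adj K_adj K_adj) fst"
  using strong_odd_coloring_dir_adj_swap[OF strong_odd_coloring_dir_snd[OF assms, of p]]
  by (simp add: comp_def)

theorem theorem4p4:
  fixes p q :: nat
  assumes "p \<ge> 2" and "q \<ge> 2"
  shows "chi_so (K_verts p \<times> K_verts q) (cart_adj K_adj K_adj) = p * q
    \<and> (odd p \<and> odd q \<longrightarrow> chi_so (K_verts p \<times> K_verts q) (dir_adj K_adj K_adj) = p * q)
    \<and> (even p \<and> odd q \<longrightarrow> chi_so (K_verts p \<times> K_verts q) (dir_adj K_adj K_adj) = q)
    \<and> (even p \<and> even q \<longrightarrow> chi_so (K_verts p \<times> K_verts q) (dir_adj K_adj K_adj) = min p q)"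
proof (intro conjI impI)
  let ?V = "K_verts p \<times> K_verts q"
  have irrefl: "\<not> cart_adj K_adj K_adj u u" "\<not> dir_adj K_adj K_adj u u" for u
    by (simp_all add: cart_adj_def dir_adj_def K_adj_def)
  have "chi_so ?V (cart_adj K_adj K_adj) = card ?V"
    by (intro chi_so_eq_card_if_inj finite_K_verts_times irrefl strong_odd_coloring_cart_inj_on)
  then show "chi_so ?V (cart_adj K_adj K_adj) = p * q" by (simp add: card_K_verts_times)
  show "chi_so ?V (dir_adj K_adj K_adj) = p * q" if "odd p \<and> odd q"
  proof -
    have "chi_so ?V (dir_adj K_adj K_adj) = card ?V"
      using that assms
      by (intro chi_so_eq_card_if_inj finite_K_verts_times irrefl strong_odd_coloring_dir_inj_on_if_odd)
        simp_all
    then show ?thesis by (simp add: card_K_verts_times)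
  qed
  show "chi_so ?V (dir_adj K_adj K_adj) = q" if "even p \<and> odd q"
  proof (rule chi_so_eqI[OF finite_K_verts_times strong_odd_coloring_dir_snd])
    fix c assume c: "strong_odd_coloring ?V (dir_adj K_adj K_adj) c"
    from strong_odd_coloring_dir_row[OF c assms(1), of 0] assms that
    show "q \<le> card (c ` ?V)" by (auto intro: card_image_ge_if_inj_on_row)
  qed (use that in auto)
  show "chi_so ?V (dir_adj K_adj K_adj) = min p q" if "even p \<and> even q"
  proof (rule chi_so_eqI[OF finite_K_verts_times])
    show "strong_odd_coloring ?V (dir_adj K_adj K_adj) (if p \<le> q then fst else snd)"
      using that strong_odd_coloring_dir_fst strong_odd_coloring_dir_snd by simp
    show "(if p \<le> q then fst else snd) ` ?V \<subseteq> {0..<min p q}"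
      by auto
    fix c assume c: "strong_odd_coloring ?V (dir_adj K_adj K_adj) c"
    have "0 < p" "0 < q" using assms by simp_all
    with strong_odd_coloring_dir_row_or_column_inj[OF c assms]
    have "q \<le> card (c ` ?V) \<or> p \<le> card (c ` ?V)"
      using card_image_ge_if_inj_on_row card_image_ge_if_inj_on_column by blast
    then show "min p q \<le> card (c ` ?V)" by auto
  qed
qed

end
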